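(* For integers $d \ge 0$ define \[ \textsc{OCB}^*(d) := 0.8948 \int_0^{1/2} \frac{r(1-2r)}{(1-r)^2}\, r^d \, dr, \qquad \textsc{MLB}^*(d) := 0.9 \int_0^{1/2} \frac{(1-2r)^2}{(1-r)^3}\, r^d \, dr . \] Let $\textnormal{\textsc{Thr}}$ be a positive constant with $\textnormal{\textsc{Thr}} \le 1/4678$. Then: (1) for every integer $d \ge 5$, $\textsc{OCB}^*(d) \ge \textsc{MLB}^*(d)$; (2) for every integer $0 \le d \le 4$, $\textsc{OCB}^*(d) \ge \frac{1}{1131} \ge \textnormal{\textsc{Thr}}$ and $\textsc{MLB}^*(d) \ge \frac{1}{1131} \ge \textnormal{\textsc{Thr}}$.
   Context: $\textnormal{\textsc{Thr}}$ is the label-density threshold fixed in the paper; the only property of it used in this statement is $\textnormal{\textsc{Thr}} \le 1/4678$. *)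

theory Defs
  imports "HOL-Analysis.Analysis"
begin

definition OCB_star :: "nat \<Rightarrow> real" where
  "OCB_star d = 0.8948 * integral {0..1/2} (\<lambda>r::real. r * (1 - 2*r) / (1 - r)^2 * r ^ d)"

definition MLB_star :: "nat \<Rightarrow> real" where
  "MLB_star d = 0.9 * integral {0..1/2} (\<lambda>r::real. (1 - 2*r)^2 / (1 - r)^3 * r ^ d)"

end

theory Submission
  imports Defs
begin

(* Both integrands are a nonnegative weight on [0, 1/2] times r^d, so OCB*(d) and MLB*(d)
   decrease in d and part (2) reduces to d = 4, where the integrals are of the form a + b ln 2
   with rational a, b.  For part (1), OCB*(d) - MLB*(d) is the d-th moment of the weight
   w(r) = (1 - 2r)/(1 - r)^3 q(r), whose quadratic factor q is increasing on [0, 1/2] and has a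
   root c there; hence (r - c) w(r) >= 0, so w(r) r^5 (r^k - c^k) >= 0 and
   OCB*(5 + k) - MLB*(5 + k) >= c^k (OCB*(5) - MLB*(5)) >= 0, the last step by the closed form
   at d = 5.  The closed forms are compared with the constants using ln 2 to eight decimals. *)

lemma ln_series_quadratic_bounds:
  fixes x :: real
  assumes "1 \<le> x"
  defines "y \<equiv> (x - 1) / (x + 1)"
  shows "(\<Sum>n<N. 2 * y ^ (2*n+1) / real (2*n+1)) \<le> ln x"
    and "ln x \<le> (\<Sum>n<N. 2 * y ^ (2*n+1) / real (2*n+1))
                    + 2 * y ^ (2*N+1) / (real (2*N+1) * (1 - y\<^sup>2))"
proof -
  define t where "t = (\<lambda>n. 2 * y ^ (2*n+1) / real (2*n+1))"
  have t_sums: "t sums ln x"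
    unfolding t_def y_def using ln_series_quadratic[of x] assms(1) by simp
  have y: "0 \<le> y" "y < 1"
    using assms by (auto simp: y_def divide_simps)
  have t_nonneg: "0 \<le> t n" for n
    using y by (simp add: t_def)
  have "sum t {..<N} \<le> ln x"
    using sum_le_suminf[OF sums_summable[OF t_sums], of "{..<N}"] t_nonneg
    by (simp add: sums_unique[OF t_sums, symmetric])
  then show "(\<Sum>n<N. 2 * y ^ (2*n+1) / real (2*n+1)) \<le> ln x"
    by (simp add: t_def)
  define C where "C = 2 * y ^ (2*N+1) / real (2*N+1)"
  have geometric: "(\<lambda>n. C * (y\<^sup>2) ^ n) sums (C / (1 - y\<^sup>2))"
    using geometric_sums[of "y\<^sup>2"] y sums_mult[of _ _ C]
    by (simp add: abs_square_less_1 divide_inverse)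
  have tail_le: "t (n + N) \<le> C * (y\<^sup>2) ^ n" for n
  proof -
    have "y ^ (2*(n+N)+1) = y ^ (2*N+1) * (y\<^sup>2) ^ n"
      by (simp add: algebra_simps flip: power_add power_mult)
    then have "t (n + N) = 2 * y ^ (2*N+1) * (y\<^sup>2) ^ n / real (2*(n+N)+1)"
      by (simp add: t_def)
    also have "\<dots> \<le> 2 * y ^ (2*N+1) * (y\<^sup>2) ^ n / real (2*N+1)"
      using y by (intro divide_left_mono) auto
    finally show ?thesis
      by (simp add: C_def)
  qed
  have "ln x = (\<Sum>n<N. t n) + (\<Sum>n. t (n + N))"
    using suminf_split_initial_segment[OF sums_summable[OF t_sums], of N]
    by (simp add: sums_unique[OF t_sums, symmetric])
  also have "(\<Sum>n. t (n + N)) \<le> C / (1 - y\<^sup>2)"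
    using suminf_le[OF tail_le summable_ignore_initial_segment[OF sums_summable[OF t_sums]]
        sums_summable[OF geometric]]
    by (simp add: sums_unique[OF geometric, symmetric])
  finally show "ln x \<le> (\<Sum>n<N. 2 * y ^ (2*n+1) / real (2*n+1))
                         + 2 * y ^ (2*N+1) / (real (2*N+1) * (1 - y\<^sup>2))"
    by (simp add: t_def C_def)
qed

text \<open>The bound \<open>1/1131 \<le> OCB_star 4\<close> needs \<open>ln 2 \<ge> 0.69314712\<close>.\<close>

lemma ln_2_bounds: "0.69314718 \<le> ln (2::real)" "ln (2::real) \<le> 0.69314719"
  using ln_series_quadratic_bounds[of 2 9] by (simp_all add: eval_nat_numeral power_divide)

lemma integral_eq_antiderivative_diff:
  fixes F f :: "real \<Rightarrow> real"
  assumes "a \<le> b" and "\<And>x. x \<in> {a..b} \<Longrightarrow> (F has_real_derivative f x) (at x)"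
  shows "integral {a..b} f = F b - F a"
  using assms
  by (intro integral_unique fundamental_theorem_of_calculus)
     (auto simp: has_real_derivative_iff_has_vector_derivative[symmetric] intro: has_field_derivative_at_within)

text \<open>The antiderivatives come from partial fractions in \<open>1 - r\<close>.\<close>

lemma OCB_star_4: "OCB_star 4 = 0.8948 * (7 * ln 2 - 4657/960)"
proof -
  let ?F = "\<lambda>r::real. - 1 / (1 - r) - 7 * ln (1 - r) + 20 * (1 - r) - 15 * (1 - r)^2
    + 25/3 * (1 - r)^3 - 11/4 * (1 - r)^4 + 2/5 * (1 - r)^5"
  have "(?F has_real_derivative r * (1 - 2*r) / (1 - r)^2 * r^4) (at r)" if "r < 1" for r
    using that by (auto intro!: derivative_eq_intros)
      (simp add: divide_simps, simp add: algebra_simps power_numeral_reduce)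
  then have "integral {0..1/2} (\<lambda>r. r * (1 - 2*r) / (1 - r)^2 * r^4) = ?F (1/2) - ?F 0"
    by (intro integral_eq_antiderivative_diff) auto
  then show ?thesis
    by (simp add: OCB_star_def ln_div power_divide)
qed

lemma OCB_star_5: "OCB_star 5 = 0.8948 * (8 * ln 2 - 5323/960)"
proof -
  let ?F = "\<lambda>r::real. - 1 / (1 - r) - 8 * ln (1 - r) + 27 * (1 - r) - 25 * (1 - r)^2
    + 55/3 * (1 - r)^3 - 9 * (1 - r)^4 + 13/5 * (1 - r)^5 - 1/3 * (1 - r)^6"
  have "(?F has_real_derivative r * (1 - 2*r) / (1 - r)^2 * r^5) (at r)" if "r < 1" for r
    using that by (auto intro!: derivative_eq_intros)
      (simp add: divide_simps, simp add: algebra_simps power_numeral_reduce)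
  then have "integral {0..1/2} (\<lambda>r. r * (1 - 2*r) / (1 - r)^2 * r^5) = ?F (1/2) - ?F 0"
    by (intro integral_eq_antiderivative_diff) auto
  then show ?thesis
    by (simp add: OCB_star_def ln_div power_divide)
qed

lemma MLB_star_4: "MLB_star 4 = 0.9 * (26 * ln 2 - 865/48)"
proof -
  let ?F = "\<lambda>r::real. 1/2 / (1 - r)^2 - 8 / (1 - r) - 26 * ln (1 - r) + 44 * (1 - r)
    - 41/2 * (1 - r)^2 + 20/3 * (1 - r)^3 - (1 - r)^4"
  have "(?F has_real_derivative (1 - 2*r)^2 / (1 - r)^3 * r^4) (at r)" if "r < 1" for r
    using that by (auto intro!: derivative_eq_intros)
      (simp add: divide_simps, simp add: algebra_simps power_numeral_reduce)
  then have "integral {0..1/2} (\<lambda>r. (1 - 2*r)^2 / (1 - r)^3 * r^4) = ?F (1/2) - ?F 0"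
    by (intro integral_eq_antiderivative_diff) auto
  then show ?thesis
    by (simp add: MLB_star_def ln_div power_divide)
qed

lemma MLB_star_5: "MLB_star 5 = 0.9 * (34 * ln 2 - 707/30)"
proof -
  let ?F = "\<lambda>r::real. 1/2 / (1 - r)^2 - 9 / (1 - r) - 34 * ln (1 - r) + 70 * (1 - r)
    - 85/2 * (1 - r)^2 + 61/3 * (1 - r)^3 - 6 * (1 - r)^4 + 4/5 * (1 - r)^5"
  have "(?F has_real_derivative (1 - 2*r)^2 / (1 - r)^3 * r^5) (at r)" if "r < 1" for r
    using that by (auto intro!: derivative_eq_intros)
      (simp add: divide_simps, simp add: algebra_simps power_numeral_reduce)
  then have "integral {0..1/2} (\<lambda>r. (1 - 2*r)^2 / (1 - r)^3 * r^5) = ?F (1/2) - ?F 0"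
    by (intro integral_eq_antiderivative_diff) auto
  then show ?thesis
    by (simp add: MLB_star_def ln_div power_divide)
qed

lemma integral_mult_power_antimono:
  fixes g :: "real \<Rightarrow> real"
  assumes "continuous_on {a..b} g" and "\<And>r. r \<in> {a..b} \<Longrightarrow> 0 \<le> g r"
    and "0 \<le> a" and "b \<le> 1" and "m \<le> n"
  shows "integral {a..b} (\<lambda>r. g r * r ^ n) \<le> integral {a..b} (\<lambda>r. g r * r ^ m)"
proof -
  have "(\<lambda>r. g r * r ^ k) integrable_on {a..b}" for k
    using assms(1) by (intro integrable_continuous_interval continuous_intros)
  moreover have "g r * r ^ n \<le> g r * r ^ m" if "r \<in> {a..b}" for r
    using assms that by (intro mult_left_mono power_decreasing) auto
  ultimately show ?thesis
    by (intro integral_le)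
qed

lemma integral_mult_power_ge_sign_change:
  fixes h :: "real \<Rightarrow> real"
  assumes "continuous_on {a..b} h" and "0 \<le> a" and "0 \<le> c"
    and "\<And>r. r \<in> {a..b} \<Longrightarrow> 0 \<le> (r - c) * h r"
  shows "c ^ k * integral {a..b} h \<le> integral {a..b} (\<lambda>r. h r * r ^ k)"
proof -
  have "c ^ k * h r \<le> h r * r ^ k" if r: "r \<in> {a..b}" for r
  proof (cases r c rule: linorder_cases)
    case less
    have "h r \<le> 0"
      using assms(4)[OF r] less by (simp add: zero_le_mult_iff)
    moreover have "r ^ k \<le> c ^ k"
      using less assms(2) r by (intro power_mono) auto
    ultimately show ?thesis
      by (simp add: mult.commute mult_left_mono_neg)
  next
    case equal
    then show ?thesis
      by simp
  next
    case greater
    have "0 \<le> h r"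
      using assms(4)[OF r] greater by (simp add: zero_le_mult_iff)
    moreover have "c ^ k \<le> r ^ k"
      using greater assms(3) by (intro power_mono) auto
    ultimately show ?thesis
      by (simp add: mult.commute mult_left_mono)
  qed
  then have "integral {a..b} (\<lambda>r. c ^ k * h r) \<le> integral {a..b} (\<lambda>r. h r * r ^ k)"
    using assms(1) by (intro integral_le integrable_continuous_interval continuous_intros) auto
  moreover have "integral {a..b} (\<lambda>r. c ^ k * h r) = c ^ k * integral {a..b} h"
    using assms(1) by (intro integral_mult[symmetric] integrable_continuous_interval)
  ultimately show ?thesis
    by simp
qed

lemma OCB_star_antimono: "m \<le> n \<Longrightarrow> OCB_star n \<le> OCB_star m"
  unfolding OCB_star_def
  by (intro mult_left_mono integral_mult_power_antimono) (auto intro!: continuous_intros)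

lemma MLB_star_antimono: "m \<le> n \<Longrightarrow> MLB_star n \<le> MLB_star m"
  unfolding MLB_star_def
  by (intro mult_left_mono integral_mult_power_antimono) (auto intro!: continuous_intros)

definition gap_weight :: "real \<Rightarrow> real" where
  "gap_weight r = (1 - 2*r) / (1 - r)^3 * (0.8948 * r * (1 - r) - 0.9 * (1 - 2*r))"

lemma continuous_on_gap_weight: "continuous_on {0..1/2} gap_weight"
  unfolding gap_weight_def by (intro continuous_intros) auto

lemma gap_weight_eq:
  fixes r :: real
  assumes "r \<noteq> 1"
  shows "gap_weight r = 0.8948 * (r * (1 - 2*r) / (1 - r)^2) - 0.9 * ((1 - 2*r)^2 / (1 - r)^3)"
proof -
  have "a / u^3 * (0.8948 * r * u - 0.9 * a) = 0.8948 * (r * a / u^2) - 0.9 * (a^2 / u^3)"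
    if "u \<noteq> 0" for a u :: real
    using that by (simp add: field_simps power2_eq_square power3_eq_cube)
  from this[of "1 - r" "1 - 2*r"] show ?thesis
    unfolding gap_weight_def using assms by simp
qed

lemma OCB_star_minus_MLB_star:
  "OCB_star d - MLB_star d = integral {0..1/2} (\<lambda>r. gap_weight r * r ^ d)"
proof -
  let ?f = "\<lambda>r::real. r * (1 - 2*r) / (1 - r)^2 * r ^ d"
  let ?g = "\<lambda>r::real. (1 - 2*r)^2 / (1 - r)^3 * r ^ d"
  have "?f integrable_on {0..1/2}" "?g integrable_on {0..1/2}"
    by (intro integrable_continuous_interval continuous_intros; force)+
  then have "OCB_star d - MLB_star d
      = integral {0..1/2} (\<lambda>r. 0.8948 * ?f r) - integral {0..1/2} (\<lambda>r. 0.9 * ?g r)"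
    unfolding OCB_star_def MLB_star_def by (simp only: integral_mult)
  also have "\<dots> = integral {0..1/2} (\<lambda>r. 0.8948 * ?f r - 0.9 * ?g r)"
    using \<open>?f integrable_on _\<close> \<open>?g integrable_on _\<close>
    by (intro integral_diff[symmetric] integrable_on_mult_right)
  also have "\<dots> = integral {0..1/2} (\<lambda>r. gap_weight r * r ^ d)"
  proof (rule integral_cong)
    fix r :: real
    assume "r \<in> {0..1/2}"
    then have "r \<noteq> 1"
      by auto
    then show "0.8948 * ?f r - 0.9 * ?g r = gap_weight r * r ^ d"
      by (simp add: gap_weight_eq left_diff_distrib)
  qed
  finally show ?thesis .
qed

lemma gap_weight_sign_change: "\<exists>c\<ge>0. \<forall>r\<in>{0..1/2}. 0 \<le> (r - c) * gap_weight r"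
proof -
  define q where "q r = 0.8948 * r * (1 - r) - 0.9 * (1 - 2*r)" for r :: real
  have "\<exists>c. 0 \<le> c \<and> c \<le> 1/2 \<and> q c = 0"
    by (rule IVT') (auto simp: q_def intro!: continuous_intros)
  then obtain c where c: "0 \<le> c" "c \<le> 1/2" "q c = 0"
    by blast
  have "0 \<le> (r - c) * gap_weight r" if r: "r \<in> {0..1/2}" for r
  proof -
    have "(r - c) * q r = (r - c) * (q r - q c)"
      using c(3) by simp
    also have "\<dots> = (r - c)^2 * (0.8948 * (1 - r - c) + 1.8)"
      by (simp add: q_def power2_eq_square field_simps)
    also have "\<dots> \<ge> 0"
      using r c by (intro mult_nonneg_nonneg) auto
    finally have "0 \<le> (r - c) * q r" .
    moreover have "0 \<le> (1 - 2*r) / (1 - r)^3"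
      using r by auto
    ultimately have "0 \<le> (r - c) * q r * ((1 - 2*r) / (1 - r)^3)"
      by (rule mult_nonneg_nonneg)
    then show ?thesis
      by (simp add: gap_weight_def q_def mult_ac)
  qed
  with c show ?thesis
    by blast
qed

lemma MLB_star_le_OCB_star:
  assumes "5 \<le> d"
  shows "MLB_star d \<le> OCB_star d"
proof -
  obtain c where c: "0 \<le> c" and sign: "\<And>r. r \<in> {0..1/2} \<Longrightarrow> 0 \<le> (r - c) * gap_weight r"
    using gap_weight_sign_change by blast
  have "0 \<le> OCB_star 5 - MLB_star 5"
    using ln_2_bounds(2) by (simp add: OCB_star_5 MLB_star_5)
  then have "0 \<le> c ^ (d - 5) * integral {0..1/2} (\<lambda>r. gap_weight r * r ^ 5)"
    using c by (simp add: OCB_star_minus_MLB_star)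
  also have "\<dots> \<le> integral {0..1/2} (\<lambda>r. gap_weight r * r ^ 5 * r ^ (d - 5))"
  proof (rule integral_mult_power_ge_sign_change)
    show "0 \<le> (r - c) * (gap_weight r * r ^ 5)" if "r \<in> {0..1/2}" for r
      using mult_nonneg_nonneg[OF sign[OF that], of "r ^ 5"] that by (simp add: mult.assoc)
  qed (use c in \<open>auto intro!: continuous_intros continuous_on_gap_weight\<close>)
  also have "\<dots> = OCB_star d - MLB_star d"
    using assms by (simp add: OCB_star_minus_MLB_star mult.assoc flip: power_add)
  finally show ?thesis
    by simp
qed

lemma one_div_1131_le_OCB_star: "d \<le> 4 \<Longrightarrow> 1/1131 \<le> OCB_star d"
  using OCB_star_antimono[of d 4] ln_2_bounds(1) by (simp add: OCB_star_4)

lemma one_div_1131_le_MLB_star: "d \<le> 4 \<Longrightarrow> 1/1131 \<le> MLB_star d"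
  using MLB_star_antimono[of d 4] ln_2_bounds(1) by (simp add: MLB_star_4)

theorem mainTheorem4:
  fixes Thr :: real
  assumes "0 < Thr" and "Thr \<le> 1/4678"
  shows "(\<forall>d::nat. d \<ge> 5 \<longrightarrow> OCB_star d \<ge> MLB_star d) \<and>
         (\<forall>d::nat. d \<le> 4 \<longrightarrow>
            OCB_star d \<ge> 1/1131 \<and> (1/1131::real) \<ge> Thr \<and>
            MLB_star d \<ge> 1/1131)"
  using MLB_star_le_OCB_star one_div_1131_le_OCB_star one_div_1131_le_MLB_star assms(2) by auto

end
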